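(* For $n>2$ and $1<k<n$, the graph $G=H_B(n,k)$ has diameter $\mathrm{diam}(G)=4$ and radius $\mathrm{rad}(G)=2$.
   Context: Fix integers $n\ge 2$ and $1\le k<n$ and positive real numbers $x_1<x_2<\dots<x_n$. Let $\mathscr{B}_n=\{\pm x_1,\pm x_2,\dots,\pm x_{n-1},x_n\}$ (so $-x_n\notin\mathscr{B}_n$). Let $\phi(\mathscr{B}_n)$ be the family of all nonempty subsets $S\subseteq\mathscr{B}_n$ whose elements have pairwise distinct absolute values and whose element of largest absolute value is positive. Let $\mathscr{B}_n^+=\{x_1,\dots,x_n\}$, let $V_1$ be the set of all $k$-element subsets of $\mathscr{B}_n^+$, and let $V_2=\phi(\mathscr{B}_n)\setminus V_1$. For $A\in\phi(\mathscr{B}_n)$ put $A^\dagger=\{|a|:a\in A\}$. The bipartite Kneser B type-$k$ graph $H_B(n,k)$ is the simple graph with vertex set $V_1\cup V_2$ in which $X\in V_1$ and $Y\in V_2$ are adjacent if and only if $X\subseteq Y^\dagger$ or $Y^\dagger\subseteq X$, and there are no other edges. *)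

theory Defs
  imports Main "HOL-Library.Extended_Nat"
begin

inductive walk :: "('a \<Rightarrow> 'a \<Rightarrow> bool) \<Rightarrow> 'a \<Rightarrow> 'a \<Rightarrow> nat \<Rightarrow> bool" for E where
  walk_nil: "walk E u u 0"
| walk_cons: "E u w \<Longrightarrow> walk E w v m \<Longrightarrow> walk E u v (Suc m)"

text \<open>Distance: length of a shortest walk; infinity if none exists.\<close>
definition gdist :: "('a \<Rightarrow> 'a \<Rightarrow> bool) \<Rightarrow> 'a \<Rightarrow> 'a \<Rightarrow> enat" where
  "gdist E u v = (INF m \<in> {m. walk E u v m}. enat m)"

definition ecc :: "'a set \<Rightarrow> ('a \<Rightarrow> 'a \<Rightarrow> bool) \<Rightarrow> 'a \<Rightarrow> enat" where
  "ecc V E u = (SUP v \<in> V. gdist E u v)"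

definition diameter :: "'a set \<Rightarrow> ('a \<Rightarrow> 'a \<Rightarrow> bool) \<Rightarrow> enat" where
  "diameter V E = (SUP u \<in> V. ecc V E u)"

definition radius :: "'a set \<Rightarrow> ('a \<Rightarrow> 'a \<Rightarrow> bool) \<Rightarrow> enat" where
  "radius V E = (INF u \<in> V. ecc V E u)"

text \<open>The points x_1 < ... < x_n are given by a function x :: nat => real on indices 1..n.\<close>

definition Bn :: "(nat \<Rightarrow> real) \<Rightarrow> nat \<Rightarrow> real set" where
  "Bn x n = {x i | i. 1 \<le> i \<and> i \<le> n} \<union> {- x i | i. 1 \<le> i \<and> i \<le> n - 1}"

definition Bn_plus :: "(nat \<Rightarrow> real) \<Rightarrow> nat \<Rightarrow> real set" where
  "Bn_plus x n = {x i | i. 1 \<le> i \<and> i \<le> n}"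

definition phiB :: "(nat \<Rightarrow> real) \<Rightarrow> nat \<Rightarrow> real set set" where
  "phiB x n = {S. S \<subseteq> Bn x n \<and> S \<noteq> {} \<and> inj_on abs S \<and>
                  (\<forall>a\<in>S. (\<forall>b\<in>S. \<bar>b\<bar> \<le> \<bar>a\<bar>) \<longrightarrow> 0 < a)}"

definition V1 :: "(nat \<Rightarrow> real) \<Rightarrow> nat \<Rightarrow> nat \<Rightarrow> real set set" where
  "V1 x n k = {X. X \<subseteq> Bn_plus x n \<and> card X = k}"

definition V2 :: "(nat \<Rightarrow> real) \<Rightarrow> nat \<Rightarrow> nat \<Rightarrow> real set set" where
  "V2 x n k = phiB x n - V1 x n k"

definition dagger :: "real set \<Rightarrow> real set" where
  "dagger A = abs ` A"

definition HB_vertices :: "(nat \<Rightarrow> real) \<Rightarrow> nat \<Rightarrow> nat \<Rightarrow> real set set" where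
  "HB_vertices x n k = V1 x n k \<union> V2 x n k"

definition HB_rel :: "(nat \<Rightarrow> real) \<Rightarrow> nat \<Rightarrow> nat \<Rightarrow> real set \<Rightarrow> real set \<Rightarrow> bool" where
  "HB_rel x n k X Y \<longleftrightarrow> X \<in> V1 x n k \<and> Y \<in> V2 x n k \<and> (X \<subseteq> dagger Y \<or> dagger Y \<subseteq> X)"

definition HB_adj :: "(nat \<Rightarrow> real) \<Rightarrow> nat \<Rightarrow> nat \<Rightarrow> real set \<Rightarrow> real set \<Rightarrow> bool" where
  "HB_adj x n k X Y \<longleftrightarrow> HB_rel x n k X Y \<or> HB_rel x n k Y X"

end

theory Submission
  imports Defs
begin

text \<open>The set \<open>B\<^sub>n\<^sup>+\<close> lies in \<open>V\<^sub>2\<close> (as \<open>k < n\<close>) and contains every \<open>k\<close>-set, while every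
  \<open>Y \<in> V\<^sub>2\<close> is comparable with some \<open>k\<close>-set (shrink or extend \<open>Y\<^sup>\<dagger>\<close>). Hence \<open>B\<^sub>n\<^sup>+\<close> has
  eccentricity at most 2, which bounds the radius by 2 and the diameter by 4. Both sides of the
  bipartition have at least two vertices, so no eccentricity is below 2. Finally \<open>{x\<^sub>1}\<close> and
  \<open>{-x\<^sub>2, x\<^sub>3, \<dots>, x\<^sub>k\<^sub>+\<^sub>1}\<close> are distinct vertices of \<open>V\<^sub>2\<close> without a common neighbour: such a
  neighbour would be a \<open>k\<close>-set containing \<open>x\<^sub>1\<close> and comparable with \<open>{x\<^sub>2, \<dots>, x\<^sub>k\<^sub>+\<^sub>1}\<close>.
  As distances between vertices on the same side are even, these two are at distance 4.\<close>

lemma walk_0_iff [simp]: "walk E u v 0 \<longleftrightarrow> u = v"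
  by (auto elim: walk.cases intro: walk.intros)

lemma walk_Suc_iff: "walk E u v (Suc m) \<longleftrightarrow> (\<exists>w. E u w \<and> walk E w v m)"
  by (auto elim: walk.cases intro: walk.intros)

lemma walk_append: "walk E u v a \<Longrightarrow> walk E v w b \<Longrightarrow> walk E u w (a + b)"
  by (induction rule: walk.induct) (auto intro: walk.intros)

lemma walk_rev:
  assumes sym: "\<And>a b. E a b \<Longrightarrow> E b a" and "walk E u v m"
  shows "walk E v u m"
  using assms(2)
proof (induction rule: walk.induct)
  case (walk_cons u w v m)
  then show ?case
    using walk_append[of E v w m u 1] sym by (auto intro: walk.intros)
qed (rule walk_nil)

lemma walk_parity:
  assumes bip: "\<And>a b. E a b \<Longrightarrow> a \<in> A \<longleftrightarrow> b \<notin> A" and "walk E u v m"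
  shows "(u \<in> A \<longleftrightarrow> v \<in> A) \<longleftrightarrow> even m"
  using assms(2) by (induction rule: walk.induct) (auto dest: bip)

lemma gdist_le_walk: "walk E u v m \<Longrightarrow> gdist E u v \<le> enat m"
  unfolding gdist_def by (rule INF_lower) simp

lemma gdist_ge_if_no_shorter_walk:
  "(\<And>j. j < m \<Longrightarrow> \<not> walk E u v j) \<Longrightarrow> enat m \<le> gdist E u v"
  unfolding gdist_def by (rule INF_greatest) (auto simp: not_less[symmetric])

lemma two_le_gdist:
  assumes "u \<noteq> v" "\<not> E u v"
  shows "2 \<le> gdist E u v"
proof -
  have "\<not> walk E u v j" if "j < 2" for j
    using that assms by (auto simp: less_2_cases_iff walk_Suc_iff)
  then have "enat 2 \<le> gdist E u v" by (rule gdist_ge_if_no_shorter_walk)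
  then show ?thesis by (simp add: numeral_eq_enat)
qed

lemma four_le_gdist_bipartite:
  assumes bip: "\<And>a b. E a b \<Longrightarrow> a \<in> A \<longleftrightarrow> b \<notin> A"
    and "u \<in> A" "v \<in> A" "u \<noteq> v" and no_common: "\<And>w. E u w \<Longrightarrow> \<not> E w v"
  shows "4 \<le> gdist E u v"
proof -
  have "\<not> walk E u v j" if "j < 4" for j
  proof
    assume walk: "walk E u v j"
    then have "even j" using walk_parity[OF bip walk] \<open>u \<in> A\<close> \<open>v \<in> A\<close> by simp
    with \<open>j < 4\<close> have "j = 0 \<or> j = 2" by presburger
    then show False
      using walk \<open>u \<noteq> v\<close> no_common by (auto simp: walk_Suc_iff numeral_2_eq_2)
  qed
  then have "enat 4 \<le> gdist E u v" by (rule gdist_ge_if_no_shorter_walk)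
  then show ?thesis by (simp add: numeral_eq_enat)
qed

lemma gdist_le_ecc: "v \<in> V \<Longrightarrow> gdist E u v \<le> ecc V E u"
  unfolding ecc_def by (rule SUP_upper)

lemma gdist_le_diameter: "u \<in> V \<Longrightarrow> v \<in> V \<Longrightarrow> gdist E u v \<le> diameter V E"
  unfolding diameter_def by (rule SUP_upper2[of u]) (simp_all add: gdist_le_ecc)

lemma ecc_le_if_walks:
  assumes "\<And>v. v \<in> V \<Longrightarrow> \<exists>m\<le>r. walk E u v m"
  shows "ecc V E u \<le> enat r"
  unfolding ecc_def
proof (rule SUP_least)
  fix v assume "v \<in> V"
  then obtain m where "m \<le> r" "walk E u v m" using assms by blast
  then show "gdist E u v \<le> enat r" by (meson enat_ord_simps(1) gdist_le_walk order_trans)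
qed

lemma diameter_le_via_centre:
  assumes sym: "\<And>a b. E a b \<Longrightarrow> E b a" and centre: "\<And>v. v \<in> V \<Longrightarrow> \<exists>m\<le>r. walk E c v m"
  shows "diameter V E \<le> enat (2 * r)"
  unfolding diameter_def
proof (rule SUP_least)
  fix u assume "u \<in> V"
  then obtain m where m: "m \<le> r" "walk E c u m" using centre by blast
  have "\<exists>l\<le>2 * r. walk E u v l" if "v \<in> V" for v
  proof -
    obtain m' where m': "m' \<le> r" "walk E c v m'" using centre \<open>v \<in> V\<close> by blast
    have "walk E u v (m + m')" using walk_append[OF walk_rev[OF sym m(2)] m'(2)] .
    then show ?thesis using m m' by (intro exI[of _ "m + m'"]) simp
  qed
  then show "ecc V E u \<le> enat (2 * r)" by (rule ecc_le_if_walks)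
qed

lemma radius_le_if_walks:
  assumes "c \<in> V" and "\<And>v. v \<in> V \<Longrightarrow> \<exists>m\<le>r. walk E c v m"
  shows "radius V E \<le> enat r"
  unfolding radius_def using assms(1) ecc_le_if_walks[OF assms(2)] by (rule INF_lower2)

lemma two_le_radius:
  assumes "\<And>u. u \<in> V \<Longrightarrow> \<exists>v\<in>V. u \<noteq> v \<and> \<not> E u v"
  shows "2 \<le> radius V E"
  unfolding radius_def
proof (rule INF_greatest)
  fix u assume "u \<in> V"
  then obtain v where "v \<in> V" "u \<noteq> v" "\<not> E u v" using assms by blast
  then show "2 \<le> ecc V E u" using two_le_gdist gdist_le_ecc order_trans by metis
qed

lemma exists_card_subset_comparable:
  assumes "finite S" "D \<subseteq> S" "k \<le> card S"
  obtains X where "X \<subseteq> S" "card X = k" "X \<subseteq> D \<or> D \<subseteq> X"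
proof (cases "k \<le> card D")
  case True
  then obtain X where "X \<subseteq> D" "card X = k" by (rule obtain_subset_with_card_n)
  then show ?thesis using that \<open>D \<subseteq> S\<close> by blast
next
  case False
  have "finite D" using assms finite_subset by blast
  have "k - card D \<le> card (S - D)" using assms card_Diff_subset[OF \<open>finite D\<close>] by simp
  then obtain T where T: "T \<subseteq> S - D" "card T = k - card D"
    by (rule obtain_subset_with_card_n)
  then have "card (D \<union> T) = k"
    using False \<open>finite D\<close> assms(1) finite_subset
    by (subst card_Un_disjoint) auto
  then show ?thesis using that[of "D \<union> T"] T \<open>D \<subseteq> S\<close> by blast
qed

locale HB_graph =
  fixes x :: "nat \<Rightarrow> real" and n k :: nat
  assumes n_gt_2: "2 < n" and k_gt_1: "1 < k" and k_lt_n: "k < n"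
    and x_pos: "\<And>i. 1 \<le> i \<Longrightarrow> i \<le> n \<Longrightarrow> 0 < x i"
    and x_less: "\<And>i j. 1 \<le> i \<Longrightarrow> i < j \<Longrightarrow> j \<le> n \<Longrightarrow> x i < x j"
begin

lemma inj_on_x: "inj_on x {1..n}"
  by (rule strict_mono_on_imp_inj_on) (auto simp: strict_mono_on_def x_less)

lemma card_x_image: "1 \<le> a \<Longrightarrow> b \<le> n \<Longrightarrow> card (x ` {a..b}) = Suc b - a"
  using card_image[OF inj_on_subset[OF inj_on_x, of "{a..b}"]] by simp

lemma x_notin_x_image:
  assumes "1 \<le> i" "i < a" "b \<le> n"
  shows "x i \<notin> x ` {a..b}"
proof
  assume "x i \<in> x ` {a..b}"
  then obtain j where "j \<in> {a..b}" "x i = x j" by blast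
  then show False using x_less[of i j] assms by simp
qed

lemma Bn_plus_eq: "Bn_plus x n = x ` {1..n}"
  unfolding Bn_plus_def by auto

lemma Bn_plus_pos: "a \<in> Bn_plus x n \<Longrightarrow> 0 < a"
  unfolding Bn_plus_def using x_pos by auto

lemma Bn_plus_subset_Bn: "Bn_plus x n \<subseteq> Bn x n"
  unfolding Bn_def Bn_plus_def by blast

lemma dagger_subset_Bn_plus: "Y \<subseteq> Bn x n \<Longrightarrow> dagger Y \<subseteq> Bn_plus x n"
  unfolding dagger_def Bn_def Bn_plus_def using x_pos by fastforce

lemma HB_adj_sym: "HB_adj x n k X Y \<Longrightarrow> HB_adj x n k Y X"
  unfolding HB_adj_def by blast

lemma HB_adj_bipartite: "HB_adj x n k X Y \<Longrightarrow> X \<in> V1 x n k \<longleftrightarrow> Y \<notin> V1 x n k"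
  unfolding HB_adj_def HB_rel_def V2_def by blast

lemma x_image_in_V1: "1 \<le> a \<Longrightarrow> b \<le> n \<Longrightarrow> Suc b - a = k \<Longrightarrow> x ` {a..b} \<in> V1 x n k"
  unfolding V1_def Bn_plus_eq using card_x_image by auto

lemma singleton_in_V2: "1 \<le> i \<Longrightarrow> i \<le> n \<Longrightarrow> {x i} \<in> V2 x n k"
  unfolding V2_def V1_def phiB_def Bn_def using x_pos k_gt_1 by auto

lemma Bn_plus_in_V2: "Bn_plus x n \<in> V2 x n k"
proof -
  have "inj_on abs (Bn_plus x n)"
    using Bn_plus_pos by (metis abs_of_pos inj_on_def)
  moreover have "Bn_plus x n \<noteq> {}" using n_gt_2 by (auto simp: Bn_plus_eq)
  ultimately have "Bn_plus x n \<in> phiB x n"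
    unfolding phiB_def using Bn_plus_subset_Bn Bn_plus_pos by blast
  moreover have "card (Bn_plus x n) \<noteq> k"
    using card_x_image[of 1 n] k_lt_n by (simp add: Bn_plus_eq)
  ultimately show ?thesis unfolding V2_def V1_def by blast
qed

lemma dagger_Bn_plus: "dagger (Bn_plus x n) = Bn_plus x n"
  unfolding dagger_def using Bn_plus_pos by force

lemma V1_adj_Bn_plus: "X \<in> V1 x n k \<Longrightarrow> HB_adj x n k (Bn_plus x n) X"
  using Bn_plus_in_V2 unfolding HB_adj_def HB_rel_def dagger_Bn_plus by (simp add: V1_def)

lemma V2_has_V1_neighbour:
  assumes "Y \<in> V2 x n k"
  shows "\<exists>X\<in>V1 x n k. HB_adj x n k X Y"
proof -
  have "dagger Y \<subseteq> Bn_plus x n"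
    using assms dagger_subset_Bn_plus unfolding V2_def phiB_def by blast
  moreover have "finite (Bn_plus x n)" "k \<le> card (Bn_plus x n)"
    using card_x_image[of 1 n] k_lt_n by (auto simp: Bn_plus_eq)
  ultimately obtain X where "X \<subseteq> Bn_plus x n" "card X = k" "X \<subseteq> dagger Y \<or> dagger Y \<subseteq> X"
    using exists_card_subset_comparable by metis
  then show ?thesis using assms unfolding HB_adj_def HB_rel_def V1_def by auto
qed

lemma walk_from_Bn_plus:
  assumes "v \<in> HB_vertices x n k"
  shows "\<exists>m\<le>2. walk (HB_adj x n k) (Bn_plus x n) v m"
proof (cases "v \<in> V1 x n k")
  case True
  then have "walk (HB_adj x n k) (Bn_plus x n) v 1"
    using V1_adj_Bn_plus by (simp add: walk_Suc_iff)
  then show ?thesis by (intro exI[of _ 1]) simp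
next
  case False
  then obtain X where "X \<in> V1 x n k" "HB_adj x n k X v"
    using assms V2_has_V1_neighbour unfolding HB_vertices_def by blast
  then have "walk (HB_adj x n k) (Bn_plus x n) v 2"
    using V1_adj_Bn_plus by (auto simp: walk_Suc_iff numeral_2_eq_2)
  then show ?thesis by (intro exI[of _ 2]) simp
qed

lemma exists_other_vertex_same_side:
  assumes "u \<in> HB_vertices x n k"
  shows "\<exists>v\<in>HB_vertices x n k. u \<noteq> v \<and> \<not> HB_adj x n k u v"
proof -
  have "x ` {1..k} \<noteq> x ` {2..Suc k}"
    using x_notin_x_image[of 1 2 "Suc k"] k_gt_1 k_lt_n by auto
  moreover have "{x 1} \<noteq> {x 2}" using x_less[of 1 2] n_gt_2 by auto
  moreover have "x ` {1..k} \<in> V1 x n k" "x ` {2..Suc k} \<in> V1 x n k"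
    using k_lt_n by (auto intro: x_image_in_V1)
  moreover have "{x 1} \<in> V2 x n k" "{x 2} \<in> V2 x n k"
    using n_gt_2 by (auto intro: singleton_in_V2)
  ultimately obtain v where "v \<in> HB_vertices x n k" "u \<noteq> v" "u \<in> V1 x n k \<longleftrightarrow> v \<in> V1 x n k"
    using assms unfolding HB_vertices_def V2_def by blast
  then show ?thesis using HB_adj_bipartite by blast
qed

definition far_vertex :: "real set" where
  "far_vertex = insert (- x 2) (x ` {3..Suc k})"

lemma dagger_far_vertex: "dagger far_vertex = x ` {2..Suc k}"
proof -
  have "dagger far_vertex = insert \<bar>- x 2\<bar> ((\<lambda>i. \<bar>x i\<bar>) ` {3..Suc k})"
    unfolding dagger_def far_vertex_def by (simp add: image_image)
  also have "(\<lambda>i. \<bar>x i\<bar>) ` {3..Suc k} = x ` {3..Suc k}"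
  proof (rule image_cong[OF refl])
    fix i assume "i \<in> {3..Suc k}"
    then show "\<bar>x i\<bar> = x i" using x_pos[of i] k_lt_n by simp
  qed
  also have "\<bar>- x 2\<bar> = x 2" using x_pos[of 2] n_gt_2 by simp
  also have "insert (x 2) (x ` {3..Suc k}) = x ` {2..Suc k}"
    using k_gt_1 by (simp add: atLeastAtMost_insertL[symmetric] numeral_3_eq_3 numeral_2_eq_2)
  finally show ?thesis .
qed

lemma far_vertex_in_V2: "far_vertex \<in> V2 x n k"
proof -
  have x2: "0 < x 2" "x 2 < x 3" using x_pos[of 2] x_less[of 2 3] k_gt_1 k_lt_n by auto
  have pos: "0 < a" if "a \<in> x ` {3..Suc k}" for a using that x_pos k_lt_n by auto
  have "- x 2 \<notin> x ` {3..Suc k}" using pos x2 by force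
  then have "card far_vertex = k"
    unfolding far_vertex_def using card_x_image[of 3 "Suc k"] k_gt_1 k_lt_n by simp
  moreover have "card (abs ` far_vertex) = k"
    using dagger_far_vertex card_x_image[of 2 "Suc k"] k_lt_n by (simp add: dagger_def)
  moreover have "finite far_vertex" by (simp add: far_vertex_def)
  ultimately have "inj_on abs far_vertex" by (simp add: inj_on_iff_eq_card)
  moreover have "far_vertex \<subseteq> Bn x n"
  proof -
    have "1 \<le> (2::nat) \<and> 2 \<le> n - 1" using n_gt_2 by simp
    then have "- x 2 \<in> Bn x n" unfolding Bn_def by blast
    moreover have "x ` {3..Suc k} \<subseteq> Bn x n"
      using k_lt_n Bn_plus_subset_Bn by (auto simp: Bn_plus_eq)
    ultimately show ?thesis unfolding far_vertex_def by blast
  qed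
  moreover have "0 < a" if "a \<in> far_vertex" "\<forall>b\<in>far_vertex. \<bar>b\<bar> \<le> \<bar>a\<bar>" for a
  proof (cases "a = - x 2")
    case True
    have "x 3 \<in> far_vertex" using k_gt_1 unfolding far_vertex_def by auto
    then show ?thesis using that(2) True x2 by force
  qed (use that pos in \<open>auto simp: far_vertex_def\<close>)
  moreover have "far_vertex \<notin> V1 x n k"
    using Bn_plus_pos[of "- x 2"] x2 unfolding V1_def far_vertex_def by auto
  ultimately show ?thesis unfolding V2_def phiB_def far_vertex_def by auto
qed

lemma no_common_neighbour: "HB_adj x n k {x 1} X \<Longrightarrow> \<not> HB_adj x n k X far_vertex"
proof
  assume adj1: "HB_adj x n k {x 1} X" and adj2: "HB_adj x n k X far_vertex"
  have x1_V2: "{x 1} \<in> V2 x n k" using n_gt_2 by (intro singleton_in_V2) auto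
  then have "X \<in> V1 x n k" using adj1 HB_adj_bipartite unfolding V2_def by blast
  then have card_X: "card X = k" and "finite X" using k_gt_1 card.infinite by (fastforce simp: V1_def)+
  have "X \<subseteq> {x 1} \<or> {x 1} \<subseteq> X"
    using adj1 x1_V2 x_pos[of 1] n_gt_2
    unfolding HB_adj_def HB_rel_def V2_def by (simp add: dagger_def)
  moreover have "\<not> X \<subseteq> {x 1}"
    using card_mono[of "{x 1}" X] card_X k_gt_1 by auto
  ultimately have x1: "x 1 \<in> X" by blast
  have "X \<subseteq> x ` {2..Suc k} \<or> x ` {2..Suc k} \<subseteq> X"
    using adj2 far_vertex_in_V2 unfolding HB_adj_def HB_rel_def V2_def dagger_far_vertex by blast
  moreover have "x 1 \<notin> x ` {2..Suc k}" using x_notin_x_image[of 1 2 "Suc k"] k_lt_n by simp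
  moreover have "card (x ` {2..Suc k}) = card X" using card_x_image[of 2 "Suc k"] k_lt_n card_X by simp
  ultimately show False using x1 card_subset_eq[OF \<open>finite X\<close>] by blast
qed

lemma four_le_gdist_x1_far_vertex: "4 \<le> gdist (HB_adj x n k) {x 1} far_vertex"
proof (rule four_le_gdist_bipartite[where A = "- V1 x n k"])
  show "\<And>a b. HB_adj x n k a b \<Longrightarrow> a \<in> - V1 x n k \<longleftrightarrow> b \<notin> - V1 x n k"
    using HB_adj_bipartite by simp
  show "{x 1} \<in> - V1 x n k" "far_vertex \<in> - V1 x n k"
    using singleton_in_V2[of 1] far_vertex_in_V2 n_gt_2 by (simp_all add: V2_def)
  have "- x 2 \<in> far_vertex" "- x 2 \<notin> {x 1}"
    using x_pos[of 1] x_pos[of 2] n_gt_2 by (simp_all add: far_vertex_def)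
  then show "{x 1} \<noteq> far_vertex" by blast
qed (rule no_common_neighbour)

end

theorem mainTheorem13:
  fixes x :: "nat \<Rightarrow> real" and n k :: nat
  assumes "n > 2" and "1 < k" and "k < n"
    and "\<forall>i. 1 \<le> i \<and> i \<le> n \<longrightarrow> 0 < x i"
    and "\<forall>i j. 1 \<le> i \<and> i < j \<and> j \<le> n \<longrightarrow> x i < x j"
  shows "diameter (HB_vertices x n k) (HB_adj x n k) = 4
       \<and> radius (HB_vertices x n k) (HB_adj x n k) = 2"
proof -
  interpret HB_graph x n k using assms by unfold_locales auto
  let ?V = "HB_vertices x n k" and ?E = "HB_adj x n k"
  have centre: "\<exists>m\<le>2. walk ?E (Bn_plus x n) v m" if "v \<in> ?V" for v
    using that by (rule walk_from_Bn_plus)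
  have vertices: "Bn_plus x n \<in> ?V" "{x 1} \<in> ?V" "far_vertex \<in> ?V"
    using Bn_plus_in_V2 singleton_in_V2[of 1] far_vertex_in_V2 assms(1)
    by (auto simp: HB_vertices_def)
  have "diameter ?V ?E \<le> enat (2 * 2)"
    using HB_adj_sym centre by (rule diameter_le_via_centre)
  moreover have "4 \<le> diameter ?V ?E"
    using four_le_gdist_x1_far_vertex gdist_le_diameter[OF vertices(2,3)] by (rule order_trans)
  moreover have "radius ?V ?E \<le> enat 2"
    using vertices(1) centre by (rule radius_le_if_walks)
  moreover have "2 \<le> radius ?V ?E"
    using exists_other_vertex_same_side by (rule two_le_radius)
  ultimately show ?thesis by (simp add: order_antisym numeral_eq_enat)
qed

end
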